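(* Let $G=(V,E,w)$ be a connected graph with uniform weights, $w_{ij}=1$ for all $\{i,j\}\in E$. Then \[ \frac{\mathrm{PROD}(G)}{\mathrm{OPT}(G)}\geq\frac13+\frac23\left(\frac{|E|}{2|E|+|V|}\right). \] Moreover, there exists a computational basis state $|s\rangle$, $s\in\{0,1\}^{|V|}$, whose energy $\langle s|H_G|s\rangle$ satisfies this inequality in place of $\mathrm{PROD}(G)$.
   Context: Qubits are placed on the vertices of $G$; with Pauli operators $X_i,Y_i,Z_i$ on qubit $i$, define $h_{ij}=\frac12(I-X_iX_j-Y_iY_j-Z_iZ_j)$ and $H_G=\sum_{\{i,j\}\in E} w_{ij}h_{ij}$. $\mathrm{OPT}(G)=\|H_G\|$ is its largest eigenvalue, and $\mathrm{PROD}(G)$ is the maximum of $\langle\phi|H_G|\phi\rangle$ over product states $\phi=\phi_1\otimes\cdots\otimes\phi_{|V|}$. *)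

theory Defs
  imports "HOL-Analysis.Analysis" "Jordan_Normal_Form.Matrix" "Jordan_Normal_Form.Char_Poly"
begin

(* Qubit i of the computational-basis index k (0 <= k < 2^n) is bit i of k. *)
definition bit_of :: "nat \<Rightarrow> nat \<Rightarrow> nat" where
  "bit_of k i = k div 2 ^ i mod 2"

definition pauliX :: "complex mat" where
  "pauliX = mat 2 2 (\<lambda>(a,b). if a \<noteq> b then 1 else 0)"

definition pauliY :: "complex mat" where
  "pauliY = mat 2 2 (\<lambda>(a,b). if a = 0 \<and> b = 1 then - \<i> else if a = 1 \<and> b = 0 then \<i> else 0)"

definition pauliZ :: "complex mat" where
  "pauliZ = mat 2 2 (\<lambda>(a,b). if a = b then (if a = 0 then 1 else -1) else 0)"

(* The single-qubit operator P acting on qubit i of an n-qubit register,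
   i.e. I \<otimes> ... \<otimes> P \<otimes> ... \<otimes> I, written entrywise. *)
definition on_qubit :: "nat \<Rightarrow> complex mat \<Rightarrow> nat \<Rightarrow> complex mat" where
  "on_qubit n P i = mat (2 ^ n) (2 ^ n) (\<lambda>(a,b).
      P $$ (bit_of a i, bit_of b i) *
      (if \<forall>j<n. j \<noteq> i \<longrightarrow> bit_of a j = bit_of b j then 1 else 0))"

definition h_term :: "nat \<Rightarrow> nat \<Rightarrow> nat \<Rightarrow> complex mat" where
  "h_term n i j = (1/2 :: complex) \<cdot>\<^sub>m
     (1\<^sub>m (2 ^ n) - on_qubit n pauliX i * on_qubit n pauliX j
                  - on_qubit n pauliY i * on_qubit n pauliY j
                  - on_qubit n pauliZ i * on_qubit n pauliZ j)"

definition simple_graph :: "nat \<Rightarrow> nat set set \<Rightarrow> bool" where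
  "simple_graph n E \<longleftrightarrow> (\<forall>e\<in>E. \<exists>i j. i < n \<and> j < n \<and> i \<noteq> j \<and> e = {i, j})"

definition connected_graph :: "nat \<Rightarrow> nat set set \<Rightarrow> bool" where
  "connected_graph n E \<longleftrightarrow>
     (\<forall>u<n. \<forall>v<n. (u, v) \<in> {(i, j). {i, j} \<in> E}\<^sup>*)"

definition hamiltonian :: "nat \<Rightarrow> nat set set \<Rightarrow> (nat set \<Rightarrow> real) \<Rightarrow> complex mat" where
  "hamiltonian n E w = mat (2 ^ n) (2 ^ n) (\<lambda>(a,b).
      \<Sum>e\<in>E. complex_of_real (w e) * h_term n (Min e) (Max e) $$ (a, b))"

(* <v|H|v> (real part; it is real for Hermitian H) *)
definition energy :: "complex mat \<Rightarrow> complex vec \<Rightarrow> real" where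
  "energy H v = Re (\<Sum>k<dim_vec v. cnj (v $ k) * (H *\<^sub>v v) $ k)"

definition OPT_G :: "nat \<Rightarrow> nat set set \<Rightarrow> (nat set \<Rightarrow> real) \<Rightarrow> real" where
  "OPT_G n E w = Max (Re ` {k. eigenvalue (hamiltonian n E w) k})"

definition product_state :: "nat \<Rightarrow> complex vec \<Rightarrow> bool" where
  "product_state n v \<longleftrightarrow> (\<exists>\<phi> :: nat \<Rightarrow> nat \<Rightarrow> complex.
      (\<forall>i<n. (cmod (\<phi> i 0))\<^sup>2 + (cmod (\<phi> i 1))\<^sup>2 = 1) \<and>
      v = vec (2 ^ n) (\<lambda>k. \<Prod>i<n. \<phi> i (bit_of k i)))"

definition PROD_G :: "nat \<Rightarrow> nat set set \<Rightarrow> (nat set \<Rightarrow> real) \<Rightarrow> real" where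
  "PROD_G n E w = Sup ((\<lambda>v. energy (hamiltonian n E w) v) ` {v. product_state n v})"

(* computational basis state |s>, s encoded by the index k < 2^n *)
definition comp_basis :: "nat \<Rightarrow> nat \<Rightarrow> complex vec" where
  "comp_basis n k = unit_vec (2 ^ n) k"

end

theory Submission
  imports Defs "Jordan_Normal_Form.Schur_Decomposition" "Jordan_Normal_Form.Spectral_Radius"
begin

unbundle no vec_syntax

text \<open>
  The edge term is \<open>h_ij = 1 - S_ij\<close>, where \<open>S_ij\<close> swaps qubits \<open>i\<close> and \<open>j\<close>.
  So for an eigenvector \<open>f\<close> of \<open>H_G\<close> with eigenvalue \<open>\<lambda>\<close> and \<open>m = |E|\<close>,
  \<open>\<lambda> \<parallel>f\<parallel>\<^sup>2 = m \<parallel>f\<parallel>\<^sup>2 - \<Sum>\<^sub>e \<langle>f, S_e f\<rangle>\<close>, and two bounds on the swap expectation suffice.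
  The Heisenberg star with \<open>d\<close> leaves has largest eigenvalue \<open>d + 1\<close>; summing this over
  the vertices gives \<open>\<lambda> \<le> m + n/2\<close>. Writing \<open>2 - S_ij\<close> as the sum of \<open>(1 - P\<^sub>iP\<^sub>j)/2\<close> for
  \<open>P = X, Y, Z\<close>, each of the three edge sums is unitarily equivalent to the diagonal cut
  operator, so \<open>\<lambda> + m \<le> 3 C\<close> with \<open>C\<close> the maximum cut. Together,
  \<open>\<lambda> (4m + n) \<le> 3 C (2m + n)\<close>, while the basis state of a maximum cut is a product state of
  energy \<open>C\<close>; positivity of \<open>OPT(G)\<close> comes from the positive trace of \<open>H_G\<close>.
\<close>

section \<open>Basis indices as bit strings\<close>

lemma less_pow2_iff_high_bits: "(a::nat) < 2 ^ n \<longleftrightarrow> (\<forall>k\<ge>n. \<not> bit a k)"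
proof -
  have "a < 2 ^ n \<longleftrightarrow> take_bit n a = a" by (simp add: take_bit_nat_eq_self_iff)
  also have "\<dots> \<longleftrightarrow> (\<forall>k. (k < n \<and> bit a k) = bit a k)"
    by (simp add: bit_eq_iff bit_take_bit_iff)
  also have "\<dots> \<longleftrightarrow> (\<forall>k\<ge>n. \<not> bit a k)" using not_le by blast
  finally show ?thesis .
qed

lemma eq_if_low_bits_eq:
  assumes "(a::nat) < 2 ^ n" "b < 2 ^ n" "\<forall>k<n. bit a k = bit b k"
  shows "a = b"
proof (rule bit_eqI)
  show "bit a k = bit b k" for k
    using assms less_pow2_iff_high_bits[of a n] less_pow2_iff_high_bits[of b n] by (cases "k < n") auto
qed

lemma bit_of_eq_if: "bit_of k i = (if bit k i then 1 else 0)"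
  unfolding bit_of_def bit_nat_def by (simp add: odd_iff_mod_2_eq_one)

lemma xor_less_pow2: "(a::nat) < 2 ^ n \<Longrightarrow> b < 2 ^ n \<Longrightarrow> xor a b < 2 ^ n"
  by (simp add: less_pow2_iff_high_bits bit_xor_iff)

lemma flip_bit_eq_xor: "flip_bit i (a::nat) = xor a (2 ^ i)"
  by (rule bit_eqI) (auto simp: bit_flip_bit_iff bit_xor_iff bit_exp_iff)

lemma flip_bit_less_pow2: "i < n \<Longrightarrow> (a::nat) < 2 ^ n \<Longrightarrow> flip_bit i a < 2 ^ n"
  unfolding flip_bit_eq_xor by (simp add: xor_less_pow2)

lemma flip_bit_neq: "flip_bit i (a::nat) \<noteq> a"
proof
  assume "flip_bit i a = a"
  then have "bit (flip_bit i a) i = bit a i" by simp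
  then show False by (simp add: bit_flip_bit_iff)
qed

lemma flip_bit_flip_bit: "flip_bit i (flip_bit i (a::nat)) = a"
  by (rule bit_eqI) (auto simp: bit_flip_bit_iff)

definition bit_pair :: "nat \<Rightarrow> nat \<Rightarrow> nat" where
  "bit_pair p q = xor (2 ^ p) (2 ^ q)"

lemma bit_bit_pair: "p \<noteq> q \<Longrightarrow> bit (bit_pair p q) r \<longleftrightarrow> r = p \<or> r = q"
  unfolding bit_pair_def by (auto simp: bit_xor_iff bit_exp_iff)

lemma bit_pair_less_pow2: "p < n \<Longrightarrow> q < n \<Longrightarrow> bit_pair p q < 2 ^ n"
  unfolding bit_pair_def by (simp add: xor_less_pow2)

lemma flip_bit_flip_bit_eq_xor: "i \<noteq> j \<Longrightarrow> flip_bit j (flip_bit i a) = xor a (bit_pair i j)"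
  by (rule bit_eqI) (auto simp: bit_flip_bit_iff bit_xor_iff bit_bit_pair)

definition swap_bits :: "nat \<Rightarrow> nat \<Rightarrow> nat \<Rightarrow> nat" where
  "swap_bits p q a = (if bit a p = bit a q then a else xor a (bit_pair p q))"

lemma bit_swap_bits:
  "p \<noteq> q \<Longrightarrow> bit (swap_bits p q a) r = bit a (if r = p then q else if r = q then p else r)"
  unfolding swap_bits_def by (auto simp: bit_xor_iff bit_bit_pair)

lemma swap_bits_less_pow2: "p < n \<Longrightarrow> q < n \<Longrightarrow> a < 2 ^ n \<Longrightarrow> swap_bits p q a < 2 ^ n"
  unfolding swap_bits_def by (auto intro: xor_less_pow2 bit_pair_less_pow2)

lemma swap_bits_swap_bits: "p \<noteq> q \<Longrightarrow> swap_bits p q (swap_bits p q a) = a"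
  by (rule bit_eqI) (auto simp: bit_swap_bits)

lemma swap_bits_commute: "swap_bits p q = swap_bits q p"
  by (rule ext) (simp add: swap_bits_def bit_pair_def xor.commute)

lemma swap_bits_eq_self_iff:
  assumes "p \<noteq> q"
  shows "swap_bits p q a = a \<longleftrightarrow> bit a p = bit a q"
proof
  assume "swap_bits p q a = a"
  then have "bit (swap_bits p q a) p = bit a p" by simp
  then show "bit a p = bit a q" using assms by (simp add: bit_swap_bits)
qed (simp add: swap_bits_def)

section \<open>The Hamiltonian acts by swapping qubits\<close>

lemma mult_mat_vec_index_sum:
  assumes "M \<in> carrier_mat N N" "v \<in> carrier_vec N" "a < N"
  shows "(M *\<^sub>v v) $ a = (\<Sum>b<N. M $$ (a, b) * v $ b)"
  using assms by (auto simp: scalar_prod_def atLeast0LessThan intro!: sum.cong)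

lemma smult_mat_mult_vec:
  assumes "A \<in> carrier_mat nr nc" "v \<in> carrier_vec nc"
  shows "(c \<cdot>\<^sub>m A) *\<^sub>v v = c \<cdot>\<^sub>v (A *\<^sub>v v)"
  using assms by (intro eq_vecI) (auto simp: scalar_prod_def sum_distrib_left ac_simps)

lemma on_qubit_carrier: "on_qubit n P i \<in> carrier_mat (2 ^ n) (2 ^ n)"
  unfolding on_qubit_def by simp

lemma agree_off_qubit_iff:
  assumes "i < n" "a < 2 ^ n" "(b::nat) < 2 ^ n"
  shows "(\<forall>j<n. j \<noteq> i \<longrightarrow> bit_of a j = bit_of b j) \<longleftrightarrow> b = a \<or> b = flip_bit i a"
proof
  assume "\<forall>j<n. j \<noteq> i \<longrightarrow> bit_of a j = bit_of b j"
  then have agree: "\<forall>j<n. j \<noteq> i \<longrightarrow> bit a j = bit b j" by (auto simp: bit_of_eq_if split: if_splits)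
  show "b = a \<or> b = flip_bit i a"
  proof (cases "bit b i = bit a i")
    case True
    then have "b = a" using agree by (intro eq_if_low_bits_eq[OF assms(3) assms(2)]) auto
    then show ?thesis by simp
  next
    case False
    then have "b = flip_bit i a"
      using agree flip_bit_less_pow2[OF assms(1,2)]
      by (intro eq_if_low_bits_eq[OF assms(3)]) (auto simp: bit_flip_bit_iff)
    then show ?thesis by simp
  qed
next
  assume "b = a \<or> b = flip_bit i a"
  then show "\<forall>j<n. j \<noteq> i \<longrightarrow> bit_of a j = bit_of b j"
    by (auto simp: bit_of_eq_if bit_flip_bit_iff)
qed

lemma on_qubit_mult_vec:
  assumes "i < n" "a < 2 ^ n" "u \<in> carrier_vec (2 ^ n)"
  shows "(on_qubit n P i *\<^sub>v u) $ a =
     P $$ (bit_of a i, bit_of a i) * u $ a + P $$ (bit_of a i, 1 - bit_of a i) * u $ flip_bit i a"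
proof -
  let ?F = "\<lambda>b. P $$ (bit_of a i, bit_of b i) * u $ b"
  have flip: "flip_bit i a < 2 ^ n" using flip_bit_less_pow2[OF assms(1,2)] .
  have "(on_qubit n P i *\<^sub>v u) $ a = (\<Sum>b<2 ^ n. on_qubit n P i $$ (a, b) * u $ b)"
    by (rule mult_mat_vec_index_sum[OF on_qubit_carrier assms(3,2)])
  also have "\<dots> = (\<Sum>b\<in>{a, flip_bit i a}. ?F b)"
  proof (rule sum.mono_neutral_cong_right)
    show "{a, flip_bit i a} \<subseteq> {..<2 ^ n}" using flip assms(2) by auto
    show "\<forall>b\<in>{..<2 ^ n} - {a, flip_bit i a}. on_qubit n P i $$ (a, b) * u $ b = 0"
      using agree_off_qubit_iff[OF assms(1,2)] assms(2) by (auto simp: on_qubit_def)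
    fix b assume "b \<in> {a, flip_bit i a}"
    then have "b < 2 ^ n" "\<forall>j<n. j \<noteq> i \<longrightarrow> bit_of a j = bit_of b j"
      using agree_off_qubit_iff[OF assms(1,2)] flip assms(2) by auto
    then show "on_qubit n P i $$ (a, b) * u $ b = ?F b"
      using assms(2) by (simp add: on_qubit_def)
  qed simp
  also have "\<dots> = ?F a + ?F (flip_bit i a)" using flip_bit_neq[of i a] by simp
  also have "bit_of (flip_bit i a) i = 1 - bit_of a i"
    by (simp add: bit_of_eq_if bit_flip_bit_iff)
  finally show ?thesis by simp
qed

lemma pauliX_mult_vec:
  assumes "i < n" "a < 2 ^ n" "u \<in> carrier_vec (2 ^ n)"
  shows "(on_qubit n pauliX i *\<^sub>v u) $ a = u $ flip_bit i a"
  unfolding on_qubit_mult_vec[OF assms] by (simp add: pauliX_def bit_of_eq_if)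

lemma pauliY_mult_vec:
  assumes "i < n" "a < 2 ^ n" "u \<in> carrier_vec (2 ^ n)"
  shows "(on_qubit n pauliY i *\<^sub>v u) $ a = (if bit a i then \<i> else - \<i>) * u $ flip_bit i a"
  unfolding on_qubit_mult_vec[OF assms] by (simp add: pauliY_def bit_of_eq_if)

lemma pauliZ_mult_vec:
  assumes "i < n" "a < 2 ^ n" "u \<in> carrier_vec (2 ^ n)"
  shows "(on_qubit n pauliZ i *\<^sub>v u) $ a = (if bit a i then -1 else 1) * u $ a"
  unfolding on_qubit_mult_vec[OF assms] by (simp add: pauliZ_def bit_of_eq_if)

text \<open>Since \<open>S_ij = (1 + X\<^sub>iX\<^sub>j + Y\<^sub>iY\<^sub>j + Z\<^sub>iZ\<^sub>j)/2\<close>, the edge term is \<open>h_ij = 1 - S_ij\<close>.\<close>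

lemma h_term_mult_vec:
  assumes ij: "i < n" "j < n" "i \<noteq> j" and a: "a < 2 ^ n" and v: "v \<in> carrier_vec (2 ^ n)"
  shows "(h_term n i j *\<^sub>v v) $ a = v $ a - v $ swap_bits i j a"
proof -
  let ?N = "(2::nat) ^ n"
  define A where "A = on_qubit n pauliX i * on_qubit n pauliX j"
  define B where "B = on_qubit n pauliY i * on_qubit n pauliY j"
  define C where "C = on_qubit n pauliZ i * on_qubit n pauliZ j"
  have carrier: "A \<in> carrier_mat ?N ?N" "B \<in> carrier_mat ?N ?N" "C \<in> carrier_mat ?N ?N"
    unfolding A_def B_def C_def by (auto intro!: mult_carrier_mat on_qubit_carrier)
  have flip: "flip_bit i a < ?N" using flip_bit_less_pow2[OF ij(1) a] .
  have carrier_vec: "on_qubit n P j *\<^sub>v v \<in> carrier_vec ?N" for P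
    using on_qubit_carrier v by (rule mult_mat_vec_carrier)
  note assoc = assoc_mult_mat_vec[OF on_qubit_carrier on_qubit_carrier v]
  have A: "(A *\<^sub>v v) $ a = v $ flip_bit j (flip_bit i a)"
    unfolding A_def assoc by (simp add: pauliX_mult_vec[OF ij(1) a carrier_vec] pauliX_mult_vec[OF ij(2) flip v])
  have B: "(B *\<^sub>v v) $ a =
      (if bit a i then \<i> else - \<i>) * ((if bit a j then \<i> else - \<i>) * v $ flip_bit j (flip_bit i a))"
    unfolding B_def assoc using ij
    by (simp add: pauliY_mult_vec[OF ij(1) a carrier_vec] pauliY_mult_vec[OF ij(2) flip v] bit_flip_bit_iff)
  have C: "(C *\<^sub>v v) $ a = (if bit a i then -1 else 1) * ((if bit a j then -1 else 1) * v $ a)"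
    unfolding C_def assoc by (simp add: pauliZ_mult_vec[OF ij(1) a carrier_vec] pauliZ_mult_vec[OF ij(2) a v])
  have I: "1\<^sub>m ?N \<in> carrier_mat ?N ?N" by simp
  have "(1\<^sub>m ?N - A - B - C) *\<^sub>v v = v - A *\<^sub>v v - B *\<^sub>v v - C *\<^sub>v v"
    using v by (simp add: minus_mult_distrib_mat_vec[OF minus_carrier_mat[OF carrier(2)] carrier(3) v]
      minus_mult_distrib_mat_vec[OF minus_carrier_mat[OF carrier(1)] carrier(2) v]
      minus_mult_distrib_mat_vec[OF I carrier(1) v])
  then have "h_term n i j *\<^sub>v v = (1/2) \<cdot>\<^sub>v (v - A *\<^sub>v v - B *\<^sub>v v - C *\<^sub>v v)"
    unfolding h_term_def A_def[symmetric] B_def[symmetric] C_def[symmetric]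
      smult_mat_mult_vec[OF minus_carrier_mat[OF carrier(3)] v] by (rule arg_cong)
  then have "(h_term n i j *\<^sub>v v) $ a = (1/2) * (v $ a - (A *\<^sub>v v) $ a - (B *\<^sub>v v) $ a - (C *\<^sub>v v) $ a)"
    using carrier v a by simp
  also have "\<dots> = v $ a - v $ swap_bits i j a"
    unfolding A B C flip_bit_flip_bit_eq_xor[OF ij(3)] swap_bits_def
    by (cases "bit a i"; cases "bit a j") (simp_all add: algebra_simps)
  finally show ?thesis .
qed

lemma simple_graph_edge:
  assumes "simple_graph n E" "e \<in> E"
  shows "Min e < Max e" "Max e < n" "e = {Min e, Max e}"
proof -
  obtain i j where "i < n" "j < n" "i \<noteq> j" "e = {i, j}"
    using assms unfolding simple_graph_def by blast
  then show "Min e < Max e" "Max e < n" "e = {Min e, Max e}"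
    by (auto simp: min_def max_def)
qed

lemma simple_graph_edge_ends:
  assumes "simple_graph n E" "{u, j} \<in> E"
  shows "u < n" "j < n" "u \<noteq> j"
proof -
  obtain a b where "a < n" "b < n" "a \<noteq> b" "{u, j} = {a, b}"
    using assms unfolding simple_graph_def by blast
  then show "u < n" "j < n" "u \<noteq> j" by (auto simp: doubleton_eq_iff)
qed

lemma simple_graph_finite: "simple_graph n E \<Longrightarrow> finite E"
  by (rule finite_subset[of _ "Pow {..<n}"]) (auto simp: simple_graph_def)

definition edge_swap :: "nat set \<Rightarrow> nat \<Rightarrow> nat" where
  "edge_swap e = swap_bits (Min e) (Max e)"

lemma edge_swap_less_pow2: "simple_graph n E \<Longrightarrow> e \<in> E \<Longrightarrow> a < 2 ^ n \<Longrightarrow> edge_swap e a < 2 ^ n"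
  unfolding edge_swap_def using simple_graph_edge swap_bits_less_pow2 by (metis order.strict_trans)

lemma hamiltonian_carrier: "hamiltonian n E w \<in> carrier_mat (2 ^ n) (2 ^ n)"
  unfolding hamiltonian_def by simp

lemma hamiltonian_mult_vec:
  assumes G: "simple_graph n E" and v: "v \<in> carrier_vec (2 ^ n)" and a: "a < 2 ^ n"
  shows "(hamiltonian n E w *\<^sub>v v) $ a = (\<Sum>e\<in>E. w e * (v $ a - v $ edge_swap e a))"
proof -
  let ?N = "(2::nat) ^ n"
  have h: "h_term n (Min e) (Max e) \<in> carrier_mat ?N ?N" for e
    unfolding h_term_def
    by (intro smult_carrier_mat minus_carrier_mat mult_carrier_mat[OF on_qubit_carrier on_qubit_carrier])
  have "(hamiltonian n E w *\<^sub>v v) $ a = (\<Sum>b<?N. hamiltonian n E w $$ (a, b) * v $ b)"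
    by (rule mult_mat_vec_index_sum[OF hamiltonian_carrier v a])
  also have "\<dots> = (\<Sum>b<?N. \<Sum>e\<in>E. w e * (h_term n (Min e) (Max e) $$ (a, b) * v $ b))"
    using a by (intro sum.cong refl) (simp add: hamiltonian_def sum_distrib_right mult.assoc)
  also have "\<dots> = (\<Sum>e\<in>E. w e * (h_term n (Min e) (Max e) *\<^sub>v v) $ a)"
    by (subst sum.swap) (simp add: mult_mat_vec_index_sum[OF h v a] sum_distrib_left)
  also have "\<dots> = (\<Sum>e\<in>E. w e * (v $ a - v $ edge_swap e a))"
  proof (intro sum.cong refl)
    fix e assume "e \<in> E"
    then have "Min e < n" "Max e < n" "Min e \<noteq> Max e"
      using simple_graph_edge[OF G \<open>e \<in> E\<close>] by auto
    then show "w e * (h_term n (Min e) (Max e) *\<^sub>v v) $ a = w e * (v $ a - v $ edge_swap e a)"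
      unfolding edge_swap_def by (simp add: h_term_mult_vec[OF _ _ _ a v])
  qed
  finally show ?thesis .
qed

section \<open>A lower bound on the swap expectation\<close>

definition braket :: "nat \<Rightarrow> (nat \<Rightarrow> complex) \<Rightarrow> (nat \<Rightarrow> complex) \<Rightarrow> complex" where
  "braket N f g = (\<Sum>a<N. cnj (f a) * g a)"

lemma braket_self: "braket N f f = of_real (\<Sum>a<N. (cmod (f a))\<^sup>2)"
  unfolding braket_def of_real_sum
  by (intro sum.cong refl) (subst complex_norm_square, simp add: mult.commute)

lemma Re_braket_self_nonneg: "Re (braket N f f) \<ge> 0"
  unfolding braket_self by (simp add: sum_nonneg)

lemma braket_add_right: "braket N f (\<lambda>a. g a + h a) = braket N f g + braket N f h"
  unfolding braket_def by (simp add: algebra_simps sum.distrib)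

lemma braket_diff_right: "braket N f (\<lambda>a. g a - h a) = braket N f g - braket N f h"
  unfolding braket_def by (simp add: algebra_simps sum_subtractf)

lemma braket_scale_right: "braket N f (\<lambda>a. c * g a) = c * braket N f g"
  unfolding braket_def by (simp add: algebra_simps sum_distrib_left)

lemma braket_sum_right: "braket N f (\<lambda>a. \<Sum>j\<in>J. g j a) = (\<Sum>j\<in>J. braket N f (g j))"
  unfolding braket_def by (simp add: sum_distrib_left sum.swap[of _ J])

lemma braket_add_left: "braket N (\<lambda>a. g a + h a) f = braket N g f + braket N h f"
  unfolding braket_def by (simp add: algebra_simps sum.distrib)

lemma braket_sum_left: "braket N (\<lambda>a. \<Sum>j\<in>J. g j a) f = (\<Sum>j\<in>J. braket N (g j) f)"
  unfolding braket_def by (simp add: sum_distrib_right sum.swap[of _ J] cnj_sum)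

lemma braket_cong_right: "(\<And>a. a < N \<Longrightarrow> g a = g' a) \<Longrightarrow> braket N f g = braket N f g'"
  unfolding braket_def by (intro sum.cong) auto

lemma sum_lessThan_involution:
  assumes "\<And>a. a < N \<Longrightarrow> s a < N" "\<And>a. a < N \<Longrightarrow> s (s a) = a"
  shows "(\<Sum>a<N. F (s a)) = (\<Sum>a<N. F a)"
  by (rule sum.reindex_bij_witness[of _ s s]) (auto simp: assms)

lemma braket_involution:
  assumes "\<And>a. a < N \<Longrightarrow> s a < N" "\<And>a. a < N \<Longrightarrow> s (s a) = a"
  shows "braket N (\<lambda>a. f (s a)) g = braket N f (\<lambda>a. g (s a))"
proof -
  have "braket N (\<lambda>a. f (s a)) g = (\<Sum>a<N. cnj (f (s a)) * g (s (s a)))"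
    unfolding braket_def by (intro sum.cong refl) (simp add: assms)
  also have "\<dots> = braket N f (\<lambda>a. g (s a))"
    unfolding braket_def by (rule sum_lessThan_involution[OF assms])
  finally show ?thesis .
qed

lemma Re_braket_involution_le:
  assumes "\<And>a. a < N \<Longrightarrow> s a < N" "\<And>a. a < N \<Longrightarrow> s (s a) = a"
  shows "Re (braket N f (\<lambda>a. f (s a))) \<le> Re (braket N f f)"
proof -
  have "Re (braket N f (\<lambda>a. f (s a))) \<le> (\<Sum>a<N. cmod (f a) * cmod (f (s a)))"
    unfolding braket_def Re_sum
    by (intro sum_mono) (metis complex_Re_le_cmod complex_mod_cnj norm_mult)
  also have "\<dots> \<le> (\<Sum>a<N. ((cmod (f a))\<^sup>2 + (cmod (f (s a)))\<^sup>2) / 2)"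
  proof (intro sum_mono)
    fix a
    show "cmod (f a) * cmod (f (s a)) \<le> ((cmod (f a))\<^sup>2 + (cmod (f (s a)))\<^sup>2) / 2"
      using sum_squares_bound[of "cmod (f a)" "cmod (f (s a))"] by simp
  qed
  also have "\<dots> = ((\<Sum>a<N. (cmod (f a))\<^sup>2) + (\<Sum>a<N. (cmod (f (s a)))\<^sup>2)) / 2"
    by (simp add: sum.distrib sum_divide_distrib[symmetric])
  also have "\<dots> = Re (braket N f f)"
    by (simp add: braket_self sum_lessThan_involution[OF assms, of "\<lambda>b. (cmod (f b))\<^sup>2"])
  finally show ?thesis .
qed

text \<open>On three qubits some two of them agree, which gives the operator identity
  \<open>S_pr S_pq + S_pq S_pr = S_pq + S_pr + S_qr - 1\<close> for the swaps \<open>S\<close>.\<close>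

lemma swap_bits_three_qubits:
  assumes "p \<noteq> q" "p \<noteq> r" "q \<noteq> r"
  shows "f (swap_bits p r (swap_bits p q a)) + f (swap_bits p q (swap_bits p r a))
         = f (swap_bits p q a) + f (swap_bits p r a) + f (swap_bits q r a) - (f a :: 'a :: ab_group_add)"
proof -
  consider "bit a p = bit a q" "bit a p = bit a r"
    | "bit a p = bit a q" "bit a p \<noteq> bit a r"
    | "bit a p = bit a r" "bit a p \<noteq> bit a q"
    | "bit a q = bit a r" "bit a p \<noteq> bit a q" by blast
  then show ?thesis
  proof cases
    case 1
    then show ?thesis by (simp add: swap_bits_def)
  next
    case 2
    then have "swap_bits p q a = a" by (simp add: swap_bits_def)
    moreover have "swap_bits p q (swap_bits p r a) = swap_bits q r a"
      using 2 assms by (intro bit_eqI) (auto simp: bit_swap_bits)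
    ultimately show ?thesis by simp
  next
    case 3
    then have "swap_bits p r a = a" by (simp add: swap_bits_def)
    moreover have "swap_bits p r (swap_bits p q a) = swap_bits q r a"
      using 3 assms by (intro bit_eqI) (auto simp: bit_swap_bits)
    ultimately show ?thesis by simp
  next
    case 4
    then have "swap_bits q r a = a" by (simp add: swap_bits_def)
    moreover have "swap_bits p r (swap_bits p q a) = swap_bits p q a"
      using 4 assms by (intro bit_eqI) (auto simp: bit_swap_bits)
    moreover have "swap_bits p q (swap_bits p r a) = swap_bits p r a"
      using 4 assms by (intro bit_eqI) (auto simp: bit_swap_bits)
    ultimately show ?thesis by simp
  qed
qed

lemma sum_off_diagonal_commute:
  assumes "finite K"
  shows "(\<Sum>j\<in>K. \<Sum>k\<in>K-{j}. F j k) = (\<Sum>j\<in>K. \<Sum>k\<in>K-{j}. (F k j :: 'a :: comm_monoid_add))"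
proof -
  have off: "(\<Sum>k\<in>K-{j}. G k) = (\<Sum>k\<in>K. if k = j then 0 else (G k :: 'a))" for j G
    by (rule sum.mono_neutral_cong_left) (use assms in auto)
  show ?thesis
    unfolding off by (subst sum.swap) (auto intro!: sum.cong)
qed

lemma star_norm_expansion:
  fixes f :: "nat \<Rightarrow> complex"
  assumes K: "finite K" "\<And>j. j \<in> K \<Longrightarrow> j < n \<and> j \<noteq> u" and u: "u < n"
  defines "g \<equiv> \<lambda>a. f a + (\<Sum>j\<in>K. f (swap_bits u j a))"
  shows "braket (2 ^ n) g g = (1 + of_nat (card K)) * braket (2 ^ n) f f
    + 2 * (\<Sum>j\<in>K. braket (2 ^ n) f (\<lambda>a. f (swap_bits u j a)))
    + (\<Sum>j\<in>K. \<Sum>k\<in>K-{j}. braket (2 ^ n) f (\<lambda>a. f (swap_bits u k (swap_bits u j a))))"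
proof -
  let ?s = "swap_bits u"
  have s_less: "j \<in> K \<Longrightarrow> a < 2 ^ n \<Longrightarrow> ?s j a < 2 ^ n" for j a
    using K(2) u by (intro swap_bits_less_pow2) auto
  have s_s: "j \<in> K \<Longrightarrow> ?s j (?s j a) = a" for j a
    using K(2) by (intro swap_bits_swap_bits) auto
  have g_s: "g (?s j a) = f (?s j a) + f a + (\<Sum>k\<in>K-{j}. f (?s k (?s j a)))" if "j \<in> K" for j a
    unfolding g_def using that by (simp add: sum.remove[OF K(1) that] s_s)
  have "braket (2 ^ n) g g = braket (2 ^ n) f g + (\<Sum>j\<in>K. braket (2 ^ n) (\<lambda>a. f (?s j a)) g)"
    unfolding g_def by (simp add: braket_add_left braket_sum_left)
  also have "(\<Sum>j\<in>K. braket (2 ^ n) (\<lambda>a. f (?s j a)) g) = (\<Sum>j\<in>K. braket (2 ^ n) f (\<lambda>a. g (?s j a)))"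
    by (intro sum.cong refl braket_involution) (auto simp: s_less s_s)
  also have "\<dots> = (\<Sum>j\<in>K. braket (2 ^ n) f (\<lambda>a. f (?s j a)) + braket (2 ^ n) f f
      + (\<Sum>k\<in>K-{j}. braket (2 ^ n) f (\<lambda>a. f (?s k (?s j a)))))"
    by (intro sum.cong refl) (simp add: g_s braket_add_right braket_sum_right)
  also have "braket (2 ^ n) f g = braket (2 ^ n) f f + (\<Sum>j\<in>K. braket (2 ^ n) f (\<lambda>a. f (?s j a)))"
    unfolding g_def by (simp add: braket_add_right braket_sum_right)
  finally show ?thesis by (simp add: sum.distrib algebra_simps)
qed

lemma star_cross_terms:
  fixes f :: "nat \<Rightarrow> complex"
  assumes K: "finite K" "\<And>j. j \<in> K \<Longrightarrow> j < n \<and> j \<noteq> u"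
  defines "d \<equiv> card K" and "q \<equiv> braket (2 ^ n) f f"
    and "R \<equiv> (\<Sum>j\<in>K. braket (2 ^ n) f (\<lambda>a. f (swap_bits u j a)))"
    and "T \<equiv> (\<Sum>j\<in>K. \<Sum>k\<in>K-{j}. braket (2 ^ n) f (\<lambda>a. f (swap_bits j k a)))"
  shows "2 * (\<Sum>j\<in>K. \<Sum>k\<in>K-{j}. braket (2 ^ n) f (\<lambda>a. f (swap_bits u k (swap_bits u j a))))
    = 2 * of_nat (d - 1) * R + T - of_nat d * of_nat (d - 1) * q"
proof -
  let ?s = "swap_bits u"
  let ?B = "\<lambda>j. braket (2 ^ n) f (\<lambda>a. f (?s j a))"
  let ?C = "\<lambda>j k. braket (2 ^ n) f (\<lambda>a. f (?s k (?s j a)))"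
  have three: "?C j k + ?C k j = ?B j + ?B k + braket (2 ^ n) f (\<lambda>a. f (swap_bits j k a)) - q"
    if "j \<in> K" "k \<in> K - {j}" for j k
  proof -
    have "u \<noteq> j" "u \<noteq> k" "j \<noteq> k" using K(2) that by auto
    then have "f (?s k (?s j a)) + f (?s j (?s k a)) = f (?s j a) + f (?s k a) + f (swap_bits j k a) - f a" for a
      by (rule swap_bits_three_qubits)
    then show ?thesis
      unfolding q_def by (simp add: braket_add_right[symmetric] braket_diff_right[symmetric])
  qed
  have pairs_left: "(\<Sum>j\<in>K. \<Sum>k\<in>K-{j}. ?B j) = of_nat (d - 1) * R"
    unfolding R_def d_def sum_distrib_left using K(1) by (simp add: card_Diff_singleton)
  have "(\<Sum>j\<in>K. \<Sum>k\<in>K-{j}. ?B k) = (\<Sum>j\<in>K. \<Sum>k\<in>K-{j}. ?B j)"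
    using sum_off_diagonal_commute[OF K(1), of "\<lambda>j k. ?B k"] by simp
  with pairs_left have pairs_right: "(\<Sum>j\<in>K. \<Sum>k\<in>K-{j}. ?B k) = of_nat (d - 1) * R"
    by simp
  have "2 * (\<Sum>j\<in>K. \<Sum>k\<in>K-{j}. ?C j k) = (\<Sum>j\<in>K. \<Sum>k\<in>K-{j}. ?C j k + ?C k j)"
    using sum_off_diagonal_commute[OF K(1), of ?C] by (simp add: sum.distrib)
  also have "\<dots> = (\<Sum>j\<in>K. \<Sum>k\<in>K-{j}. ?B j + ?B k + braket (2 ^ n) f (\<lambda>a. f (swap_bits j k a)) - q)"
    by (intro sum.cong refl three)
  also have "\<dots> = (\<Sum>j\<in>K. \<Sum>k\<in>K-{j}. ?B j) + (\<Sum>j\<in>K. \<Sum>k\<in>K-{j}. ?B k) + T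
      - (\<Sum>j\<in>K. \<Sum>k\<in>K-{j}. q)"
    unfolding T_def by (simp add: sum.distrib sum_subtractf)
  also have "\<dots> = of_nat (d - 1) * R + of_nat (d - 1) * R + T - of_nat d * of_nat (d - 1) * q"
    unfolding pairs_left pairs_right d_def using K(1) by (simp add: card_Diff_singleton)
  finally show ?thesis by simp
qed

text \<open>Equivalently, the Heisenberg star \<open>\<Sum>\<^sub>j h_uj\<close> with \<open>d\<close> leaves has largest eigenvalue \<open>d + 1\<close>.
  Expanding \<open>0 \<le> \<parallel>f + \<Sum>\<^sub>j S_uj f\<parallel>\<^sup>2\<close> with the three-qubit identity leaves
  \<open>(d + 1) (q + R) = \<parallel>\<dots>\<parallel>\<^sup>2 + (d (d - 1) q - T) / 2\<close>, and every term of \<open>T\<close> is at most \<open>q\<close>.\<close>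

lemma star_swap_bound:
  assumes K: "finite K" "\<And>j. j \<in> K \<Longrightarrow> j < n \<and> j \<noteq> u" and u: "u < n"
  shows "Re (braket (2 ^ n) f f + (\<Sum>j\<in>K. braket (2 ^ n) f (\<lambda>a. f (swap_bits u j a)))) \<ge> 0"
proof -
  define N where "N = (2::nat) ^ n"
  define d where "d = card K"
  define q where "q = braket N f f"
  define R where "R = (\<Sum>j\<in>K. braket N f (\<lambda>a. f (swap_bits u j a)))"
  define T where "T = (\<Sum>j\<in>K. \<Sum>k\<in>K-{j}. braket N f (\<lambda>a. f (swap_bits j k a)))"
  define P where "P = (\<Sum>j\<in>K. \<Sum>k\<in>K-{j}. braket N f (\<lambda>a. f (swap_bits u k (swap_bits u j a))))"
  define g where "g a = f a + (\<Sum>j\<in>K. f (swap_bits u j a))" for a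
  have expand: "braket N g g = (1 + of_nat d) * q + 2 * R + P"
    using star_norm_expansion[OF K u, of f] unfolding N_def d_def q_def R_def P_def g_def[abs_def] .
  have cross: "2 * P = 2 * of_nat (d - 1) * R + T - of_nat d * of_nat (d - 1) * q"
    using star_cross_terms[OF K, of f] unfolding N_def d_def q_def R_def P_def T_def .
  have dR: "of_nat d * R = of_nat (d - 1) * R + R"
    using K(1) by (cases d) (simp_all add: algebra_simps R_def d_def)
  have "2 * (1 + of_nat d) * (q + R) = 2 * q + 2 * of_nat d * q + 2 * R + 2 * (of_nat d * R)"
    by (simp add: algebra_simps)
  also have "\<dots> = 2 * ((1 + of_nat d) * q + 2 * R + P) + (of_nat d * of_nat (d - 1) * q - T)"
    unfolding dR using cross by (simp add: algebra_simps)
  finally have identity: "2 * (1 + of_nat d) * (q + R) = 2 * braket N g g + (of_nat d * of_nat (d - 1) * q - T)"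
    unfolding expand .
  have "2 * (1 + real d) * Re (q + R) = 2 * Re (braket N g g) + (real d * real (d - 1) * Re q - Re T)"
    using arg_cong[OF identity, of Re] by simp
  moreover have "Re T \<le> real d * real (d - 1) * Re q"
  proof -
    have "Re T \<le> (\<Sum>j\<in>K. \<Sum>k\<in>K-{j}. Re q)"
      unfolding T_def Re_sum q_def
    proof (intro sum_mono Re_braket_involution_le)
      fix j k a assume "j \<in> K" "k \<in> K - {j}" "a < N"
      then show "swap_bits j k a < N" "swap_bits j k (swap_bits j k a) = a"
        using K(2) unfolding N_def by (auto intro: swap_bits_less_pow2 swap_bits_swap_bits)
    qed
    also have "\<dots> = real d * real (d - 1) * Re q"
      unfolding d_def using K(1) by (simp add: card_Diff_singleton)
    finally show ?thesis .
  qed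
  ultimately have "2 * (1 + real d) * Re (q + R) \<ge> 0"
    using Re_braket_self_nonneg[of N g] by (simp add: algebra_simps)
  then show ?thesis
    unfolding q_def R_def N_def by (simp add: zero_le_mult_iff)
qed

lemma simple_graph_oriented_edges:
  assumes G: "simple_graph n E"
  shows "Sigma {..<n} (\<lambda>u. {j. {u, j} \<in> E})
    = (\<lambda>e. (Min e, Max e)) ` E \<union> (\<lambda>e. (Max e, Min e)) ` E"
proof (intro equalityI subsetI)
  fix x assume "x \<in> Sigma {..<n} (\<lambda>u. {j. {u, j} \<in> E})"
  then obtain u j where x: "x = (u, j)" "{u, j} \<in> E" by auto
  have "u \<noteq> j" using simple_graph_edge_ends[OF G x(2)] by simp
  then consider "Min {u, j} = u" "Max {u, j} = j" | "Min {u, j} = j" "Max {u, j} = u"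
    by (cases "u < j") auto
  then show "x \<in> (\<lambda>e. (Min e, Max e)) ` E \<union> (\<lambda>e. (Max e, Min e)) ` E"
    by cases (use x in \<open>auto intro!: image_eqI[of _ _ "{u, j}"]\<close>)
next
  fix x assume "x \<in> (\<lambda>e. (Min e, Max e)) ` E \<union> (\<lambda>e. (Max e, Min e)) ` E"
  then obtain e where e: "e \<in> E" "x = (Min e, Max e) \<or> x = (Max e, Min e)" by auto
  then show "x \<in> Sigma {..<n} (\<lambda>u. {j. {u, j} \<in> E})"
    using simple_graph_edge[OF G e(1)] by (auto simp: insert_commute)
qed

lemma sum_neighbours_eq_sum_edges:
  assumes G: "simple_graph n E"
  shows "(\<Sum>u<n. \<Sum>j | {u, j} \<in> E. F u j) = (\<Sum>e\<in>E. F (Min e) (Max e) + (F (Max e) (Min e) :: 'a :: comm_monoid_add))"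
proof -
  have fin: "finite E" using simple_graph_finite[OF G] .
  have inj: "inj_on (\<lambda>e. (Min e, Max e)) E" "inj_on (\<lambda>e. (Max e, Min e)) E"
    by (auto intro!: inj_onI) (metis simple_graph_edge(3)[OF G] prod.inject)+
  have disjoint: "(\<lambda>e. (Min e, Max e)) ` E \<inter> (\<lambda>e. (Max e, Min e)) ` E = {}"
    by (force dest: simple_graph_edge(1)[OF G])
  have "(\<Sum>u<n. \<Sum>j | {u, j} \<in> E. F u j) = (\<Sum>(u, j)\<in>Sigma {..<n} (\<lambda>u. {j. {u, j} \<in> E}). F u j)"
    by (rule sum.Sigma) (auto intro: finite_subset[of _ "{..<n}"] dest: simple_graph_edge_ends[OF G])
  also have "\<dots> = (\<Sum>e\<in>E. F (Min e) (Max e)) + (\<Sum>e\<in>E. F (Max e) (Min e))"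
    unfolding simple_graph_oriented_edges[OF G]
    by (subst sum.union_disjoint) (use fin disjoint in \<open>auto simp: sum.reindex[OF inj(1)] sum.reindex[OF inj(2)]\<close>)
  finally show ?thesis by (simp add: sum.distrib)
qed

text \<open>Summing the star bound over all vertices counts every edge twice.\<close>

lemma edges_swap_lower_bound:
  assumes G: "simple_graph n E"
  shows "2 * Re (\<Sum>e\<in>E. braket (2 ^ n) f (\<lambda>a. f (edge_swap e a))) + real n * Re (braket (2 ^ n) f f) \<ge> 0"
proof -
  let ?F = "\<lambda>u j. braket (2 ^ n) f (\<lambda>a. f (swap_bits u j a))"
  have "0 \<le> (\<Sum>u<n. Re (braket (2 ^ n) f f + (\<Sum>j | {u, j} \<in> E. ?F u j)))"
  proof (intro sum_nonneg star_swap_bound)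
    show "finite {j. {u, j} \<in> E}" for u
      by (rule finite_subset[of _ "{..<n}"]) (auto dest: simple_graph_edge_ends[OF G])
  qed (auto dest: simple_graph_edge_ends[OF G])
  also have "\<dots> = real n * Re (braket (2 ^ n) f f) + Re (\<Sum>u<n. \<Sum>j | {u, j} \<in> E. ?F u j)"
    by (simp add: sum.distrib Re_sum)
  also have "(\<Sum>u<n. \<Sum>j | {u, j} \<in> E. ?F u j) = (\<Sum>e\<in>E. ?F (Min e) (Max e) + ?F (Max e) (Min e))"
    by (rule sum_neighbours_eq_sum_edges[OF G])
  also have "\<dots> = 2 * (\<Sum>e\<in>E. braket (2 ^ n) f (\<lambda>a. f (edge_swap e a)))"
    by (simp add: sum_distrib_left edge_swap_def swap_bits_commute[of "Max _"])
  finally show ?thesis by simp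
qed

section \<open>An upper bound by the maximum cut\<close>

definition walsh :: "nat \<Rightarrow> nat \<Rightarrow> nat \<Rightarrow> complex" where
  "walsh n b a = (-1) ^ card {k. k < n \<and> bit a k \<and> bit b k}"

lemma walsh_0 [simp]: "walsh n b 0 = 1"
  unfolding walsh_def by simp

lemma cnj_walsh [simp]: "cnj (walsh n b a) = walsh n b a"
  unfolding walsh_def by simp

lemma walsh_xor: "walsh n b (xor a c) = walsh n b a * walsh n b c"
proof -
  define A where "A = {k. k < n \<and> bit a k \<and> bit b k}"
  define C where "C = {k. k < n \<and> bit c k \<and> bit b k}"
  define X where "X = {k. k < n \<and> bit (xor a c) k \<and> bit b k}"
  have fin: "finite A" "finite C" unfolding A_def C_def by auto
  have X: "X = (A - C) \<union> (C - A)"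
    unfolding X_def A_def C_def by (auto simp: bit_xor_iff)
  have "card X = card (A - C) + card (C - A)"
    unfolding X by (rule card_Un_disjoint) (use fin in auto)
  moreover have "card A + card C = card (A - C) + card (C - A) + 2 * card (A \<inter> C)"
    using card_Int_Diff[OF fin(1), of C] card_Int_Diff[OF fin(2), of A] by (simp add: Int_commute)
  ultimately have "card A + card C = card X + 2 * card (A \<inter> C)" by simp
  then have "(-1::complex) ^ (card A + card C) = (-1) ^ card X"
    by (simp add: power_add power_mult)
  then show ?thesis unfolding walsh_def A_def[symmetric] C_def[symmetric] X_def[symmetric]
    by (simp add: power_add)
qed

lemma walsh_flip_bit:
  assumes "i < n" "bit c i"
  shows "walsh n (flip_bit i b) c = - walsh n b c"
proof -
  define Y where "Y = {k. k < n \<and> bit c k \<and> bit b k}"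
  have fin: "finite Y" unfolding Y_def by auto
  show ?thesis
  proof (cases "bit b i")
    case True
    then have flipped: "{k. k < n \<and> bit c k \<and> bit (flip_bit i b) k} = Y - {i}" and "i \<in> Y"
      unfolding Y_def using assms by (auto simp: bit_flip_bit_iff)
    have card: "card Y = Suc (card (Y - {i}))"
      by (rule card_Suc_Diff1[OF fin \<open>i \<in> Y\<close>, symmetric])
    show ?thesis unfolding walsh_def Y_def[symmetric] flipped card by simp
  next
    case False
    then have "{k. k < n \<and> bit c k \<and> bit (flip_bit i b) k} = insert i Y" "i \<notin> Y"
      unfolding Y_def using assms by (auto simp: bit_flip_bit_iff)
    then show ?thesis unfolding walsh_def Y_def[symmetric] using fin by simp
  qed
qed

lemma sum_walsh:
  assumes c: "c < 2 ^ n"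
  shows "(\<Sum>b<2 ^ n. walsh n b c) = (if c = 0 then 2 ^ n else 0)"
proof (cases "c = 0")
  case False
  then obtain i where i: "bit c i" using bit_eq_iff[of c 0] by auto
  then have "i < n" using c less_pow2_iff_high_bits not_le by blast
  have "(\<Sum>b<2 ^ n. walsh n (flip_bit i b) c) = (\<Sum>b<2 ^ n. walsh n b c)"
    by (rule sum_lessThan_involution) (auto simp: flip_bit_less_pow2[OF \<open>i < n\<close>] flip_bit_flip_bit)
  moreover have "(\<Sum>b<2 ^ n. walsh n (flip_bit i b) c) = - (\<Sum>b<2 ^ n. walsh n b c)"
    by (simp add: walsh_flip_bit[OF \<open>i < n\<close> i] sum_negf)
  ultimately show ?thesis using False by simp
qed simp

lemma walsh_bit_pair:
  assumes "i < n" "j < n" "i \<noteq> j"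
  shows "walsh n b (bit_pair i j) = (if bit b i = bit b j then 1 else -1)"
proof -
  have bits: "{k. k < n \<and> bit (bit_pair i j) k \<and> bit b k}
      = (if bit b i then {i} else {}) \<union> (if bit b j then {j} else {})"
    using assms by (auto simp: bit_bit_pair)
  show ?thesis
    unfolding walsh_def bits using assms(3) by (cases "bit b i"; cases "bit b j") simp_all
qed

lemma xor_xor_eq_0_iff: "xor (xor a a') c = (0::nat) \<longleftrightarrow> a' = xor a c"
proof -
  have "xor (xor a a') c = 0 \<longleftrightarrow> (\<forall>k. bit (xor (xor a a') c) k = bit (0::nat) k)"
    by (auto intro: bit_eqI)
  also have "\<dots> \<longleftrightarrow> (\<forall>k. bit a' k = bit (xor a c) k)"
    by (simp add: bit_xor_iff) blast
  also have "\<dots> \<longleftrightarrow> a' = xor a c"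
    by (auto intro: bit_eqI)
  finally show ?thesis .
qed

text \<open>The Walsh--Hadamard transform \<open>W\<close> of \<open>g\<close> turns translation by \<open>c\<close> into multiplication by
  the character \<open>walsh n \<cdot> c\<close>.\<close>

lemma walsh_autocorrelation:
  assumes c: "c < 2 ^ n" and W: "\<And>b. W b = (\<Sum>a<2 ^ n. walsh n b a * g a)"
  shows "(\<Sum>b<2 ^ n. cnj (W b) * W b * walsh n b c) = of_nat (2 ^ n) * braket (2 ^ n) g (\<lambda>a. g (xor a c))"
proof -
  let ?N = "(2::nat) ^ n"
  have "(\<Sum>b<?N. cnj (W b) * W b * walsh n b c)
      = (\<Sum>b<?N. \<Sum>a<?N. \<Sum>a'<?N. cnj (g a) * g a' * walsh n b (xor (xor a a') c))"
  proof (intro sum.cong refl)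
    fix b
    have "cnj (W b) * W b * walsh n b c
        = (\<Sum>a<?N. walsh n b a * cnj (g a)) * (\<Sum>a'<?N. walsh n b a' * g a') * walsh n b c"
      by (simp add: W cnj_sum)
    also have "\<dots> = (\<Sum>a<?N. \<Sum>a'<?N. (walsh n b a * cnj (g a)) * (walsh n b a' * g a') * walsh n b c)"
      by (simp add: sum_distrib_left sum_distrib_right mult.assoc, rule sum.swap)
    finally show "cnj (W b) * W b * walsh n b c
        = (\<Sum>a<?N. \<Sum>a'<?N. cnj (g a) * g a' * walsh n b (xor (xor a a') c))"
      by (simp add: walsh_xor algebra_simps)
  qed
  also have "\<dots> = (\<Sum>a<?N. \<Sum>a'<?N. cnj (g a) * g a' * (\<Sum>b<?N. walsh n b (xor (xor a a') c)))"
    by (subst sum.swap, rule sum.cong[OF refl], subst sum.swap) (simp add: sum_distrib_left)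
  also have "\<dots> = (\<Sum>a<?N. \<Sum>a'<?N. if a' = xor a c then of_nat ?N * (cnj (g a) * g a') else 0)"
    using c by (intro sum.cong refl) (simp add: sum_walsh xor_less_pow2 xor_xor_eq_0_iff)
  also have "\<dots> = of_nat ?N * braket ?N g (\<lambda>a. g (xor a c))"
    using c by (simp add: sum.delta' xor_less_pow2 braket_def sum_distrib_left)
  finally show ?thesis .
qed

definition cut_value :: "nat set set \<Rightarrow> nat \<Rightarrow> real" where
  "cut_value E b = (\<Sum>e\<in>E. if bit b (Min e) \<noteq> bit b (Max e) then 1 else 0)"

definition edge_mask :: "nat set \<Rightarrow> nat" where
  "edge_mask e = bit_pair (Min e) (Max e)"

lemma edge_mask_less_pow2: "simple_graph n E \<Longrightarrow> e \<in> E \<Longrightarrow> edge_mask e < 2 ^ n"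
  unfolding edge_mask_def using simple_graph_edge by (metis bit_pair_less_pow2 order.strict_trans)

text \<open>The terms \<open>(1 - X\<^sub>iX\<^sub>j)/2\<close>, \<open>(1 - Y\<^sub>iY\<^sub>j)/2\<close>, \<open>(1 - Z\<^sub>iZ\<^sub>j)/2\<close> summed over the edges are each
  unitarily equivalent to the diagonal cut operator, so each is bounded by the maximum cut \<open>C\<close>.
  For \<open>X\<close> the equivalence is the Walsh--Hadamard transform.\<close>

lemma xx_terms_bound:
  assumes G: "simple_graph n E" and C: "\<And>b. b < 2 ^ n \<Longrightarrow> cut_value E b \<le> C"
  shows "Re (\<Sum>e\<in>E. braket (2 ^ n) g (\<lambda>a. (g a - g (xor a (edge_mask e))) / 2)) \<le> C * Re (braket (2 ^ n) g g)"
proof -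
  define N where "N = (2::nat) ^ n"
  define W where "W b = (\<Sum>a<N. walsh n b a * g a)" for b
  define w where "w b = (cmod (W b))\<^sup>2" for b
  have N: "N > 0" unfolding N_def by simp
  have ww: "cnj (W b) * W b = of_real (w b)" for b
    unfolding w_def by (subst complex_norm_square) (simp add: mult.commute)
  have shift: "braket N g (\<lambda>a. g (xor a c)) = (\<Sum>b<N. of_real (w b) * walsh n b c) / of_nat N"
    if "c < N" for c
  proof -
    have "(\<Sum>b<N. cnj (W b) * W b * walsh n b c) = of_nat N * braket N g (\<lambda>a. g (xor a c))"
      using that unfolding N_def by (intro walsh_autocorrelation) (simp_all add: W_def N_def)
    then show ?thesis using N unfolding ww by (simp add: field_simps)
  qed
  have norm: "braket N g g = (\<Sum>b<N. of_real (w b)) / of_nat N"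
    using shift[of 0] N by simp
  have edge_term: "braket N g (\<lambda>a. (g a - g (xor a (edge_mask e))) / 2)
      = (\<Sum>b<N. of_real (w b * (if bit b (Min e) \<noteq> bit b (Max e) then 1 else 0))) / of_nat N"
    if e: "e \<in> E" for e
  proof -
    have mask: "edge_mask e < N" unfolding N_def by (rule edge_mask_less_pow2[OF G e])
    have ends: "Min e < n" "Max e < n" "Min e \<noteq> Max e" using simple_graph_edge[OF G e] by auto
    have "braket N g (\<lambda>a. (g a - g (xor a (edge_mask e))) / 2)
        = (braket N g g - braket N g (\<lambda>a. g (xor a (edge_mask e)))) / 2"
      using braket_scale_right[of N g "1/2" "\<lambda>a. g a - g (xor a (edge_mask e))"]
      by (simp add: braket_diff_right)
    also have "\<dots> = (\<Sum>b<N. of_real (w b) * (1 - walsh n b (edge_mask e))) / (2 * of_nat N)"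
      unfolding norm shift[OF mask]
      by (simp add: right_diff_distrib sum_subtractf diff_divide_distrib divide_divide_eq_left mult.commute)
    also have "(\<Sum>b<N. of_real (w b) * (1 - walsh n b (edge_mask e)))
        = 2 * (\<Sum>b<N. of_real (w b * (if bit b (Min e) \<noteq> bit b (Max e) then 1 else 0)))"
      unfolding edge_mask_def sum_distrib_left by (intro sum.cong refl) (simp add: walsh_bit_pair[OF ends])
    finally show ?thesis by simp
  qed
  have "(\<Sum>e\<in>E. braket N g (\<lambda>a. (g a - g (xor a (edge_mask e))) / 2))
      = (\<Sum>e\<in>E. (\<Sum>b<N. of_real (w b * (if bit b (Min e) \<noteq> bit b (Max e) then 1 else 0))) / of_nat N)"
    by (intro sum.cong refl edge_term)
  also have "\<dots> = (\<Sum>b<N. of_real (w b * cut_value E b)) / of_nat N"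
    unfolding cut_value_def sum_divide_distrib[symmetric]
    by (simp add: sum.swap[of _ E] sum_distrib_left)
  finally have "(\<Sum>e\<in>E. braket N g (\<lambda>a. (g a - g (xor a (edge_mask e))) / 2))
      = (\<Sum>b<N. of_real (w b * cut_value E b)) / of_nat N" .
  then have "Re (\<Sum>e\<in>E. braket N g (\<lambda>a. (g a - g (xor a (edge_mask e))) / 2)) = (\<Sum>b<N. w b * cut_value E b) / N"
    by (simp add: Re_divide_of_nat Re_sum)
  also have "\<dots> \<le> (\<Sum>b<N. w b * C) / N"
    using N by (intro divide_right_mono sum_mono mult_left_mono) (auto simp: C N_def w_def)
  also have "\<dots> = C * Re (braket N g g)"
    unfolding norm by (simp add: Re_divide_of_nat Re_sum sum_distrib_left[symmetric] mult.commute)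
  finally show ?thesis unfolding N_def .
qed

text \<open>For \<open>Y\<close>, conjugating by the diagonal phase \<open>\<i>\<^sup>|\<^sup>a\<^sup>|\<close> turns \<open>Y\<^sub>iY\<^sub>j\<close> into \<open>-X\<^sub>iX\<^sub>j\<close>.\<close>

definition qubit_phase :: "nat \<Rightarrow> nat \<Rightarrow> complex" where
  "qubit_phase n a = (\<Prod>k<n. if bit a k then \<i> else 1)"

lemma cnj_qubit_phase_mult: "cnj (qubit_phase n a) * qubit_phase n a = 1"
proof -
  have "cnj (qubit_phase n a) * qubit_phase n a
      = (\<Prod>k<n. cnj (if bit a k then \<i> else 1) * (if bit a k then \<i> else 1))"
    unfolding qubit_phase_def cnj_prod prod.distrib[symmetric] ..
  also have "\<dots> = 1" by (intro prod.neutral) simp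
  finally show ?thesis .
qed

lemma qubit_phase_xor_bit_pair:
  assumes "i < n" "j < n" "i \<noteq> j"
  shows "cnj (qubit_phase n a) * qubit_phase n (xor a (bit_pair i j)) = (if bit a i = bit a j then -1 else 1)"
proof -
  define r where "r k = cnj (if bit a k then \<i> else 1) * (if bit (xor a (bit_pair i j)) k then \<i> else 1)" for k
  have "cnj (qubit_phase n a) * qubit_phase n (xor a (bit_pair i j)) = (\<Prod>k<n. r k)"
    unfolding qubit_phase_def cnj_prod prod.distrib[symmetric] r_def ..
  also have "\<dots> = (\<Prod>k\<in>{i, j}. r k)"
    by (rule prod.mono_neutral_right) (use assms in \<open>auto simp: r_def bit_xor_iff bit_bit_pair\<close>)
  also have "\<dots> = (if bit a i = bit a j then -1 else 1)"
    unfolding r_def using assms by (cases "bit a i"; cases "bit a j") (simp_all add: bit_xor_iff bit_bit_pair)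
  finally show ?thesis .
qed

lemma yy_terms_bound:
  assumes G: "simple_graph n E" and C: "\<And>b. b < 2 ^ n \<Longrightarrow> cut_value E b \<le> C"
  shows "Re (\<Sum>e\<in>E. braket (2 ^ n) f
      (\<lambda>a. (f a + (if bit a (Min e) = bit a (Max e) then 1 else -1) * f (xor a (edge_mask e))) / 2))
    \<le> C * Re (braket (2 ^ n) f f)"
proof -
  define g where "g a = qubit_phase n a * f a" for a
  have norm: "braket (2 ^ n) g g = braket (2 ^ n) f f"
    unfolding braket_def g_def
    by (intro sum.cong refl) (metis (no_types) cnj_qubit_phase_mult complex_cnj_mult mult.left_commute mult.assoc mult_1_left)
  have "braket (2 ^ n) f (\<lambda>a. (f a + (if bit a (Min e) = bit a (Max e) then 1 else -1) * f (xor a (edge_mask e))) / 2)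
      = braket (2 ^ n) g (\<lambda>a. (g a - g (xor a (edge_mask e))) / 2)" if e: "e \<in> E" for e
  proof -
    have ends: "Min e < n" "Max e < n" "Min e \<noteq> Max e" using simple_graph_edge[OF G e] by auto
    show ?thesis unfolding braket_def
    proof (intro sum.cong refl)
      fix a
      have "cnj (g a) * ((g a - g (xor a (edge_mask e))) / 2)
          = cnj (f a) * ((cnj (qubit_phase n a) * qubit_phase n a) * f a
            - (cnj (qubit_phase n a) * qubit_phase n (xor a (edge_mask e))) * f (xor a (edge_mask e))) / 2"
        unfolding g_def by (simp add: algebra_simps)
      then show "cnj (f a) * ((f a + (if bit a (Min e) = bit a (Max e) then 1 else -1) * f (xor a (edge_mask e))) / 2)
          = cnj (g a) * ((g a - g (xor a (edge_mask e))) / 2)"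
        unfolding cnj_qubit_phase_mult edge_mask_def qubit_phase_xor_bit_pair[OF ends] by simp
    qed
  qed
  then show ?thesis
    using xx_terms_bound[OF G C, of g] unfolding norm by (simp cong: sum.cong)
qed

lemma zz_terms_bound:
  assumes C: "\<And>b. b < 2 ^ n \<Longrightarrow> cut_value E b \<le> C"
  shows "Re (\<Sum>e\<in>E. braket (2 ^ n) f (\<lambda>a. (if bit a (Min e) \<noteq> bit a (Max e) then 1 else 0) * f a))
    \<le> C * Re (braket (2 ^ n) f f)"
proof -
  have "(\<Sum>e\<in>E. braket (2 ^ n) f (\<lambda>a. (if bit a (Min e) \<noteq> bit a (Max e) then 1 else 0) * f a))
      = (\<Sum>a<2 ^ n. of_real (cut_value E a) * (cnj (f a) * f a))"
    unfolding braket_def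
  proof (subst sum.swap, intro sum.cong refl)
    fix a
    have "of_real (cut_value E a) = (\<Sum>e\<in>E. if bit a (Min e) \<noteq> bit a (Max e) then 1 else (0::complex))"
      unfolding cut_value_def of_real_sum by (intro sum.cong refl) simp
    then show "(\<Sum>e\<in>E. cnj (f a) * ((if bit a (Min e) \<noteq> bit a (Max e) then 1 else 0) * f a))
        = of_real (cut_value E a) * (cnj (f a) * f a)"
      by (simp add: sum_distrib_left sum_distrib_right algebra_simps)
  qed
  also have "\<dots> = of_real (\<Sum>a<2 ^ n. cut_value E a * (cmod (f a))\<^sup>2)"
    unfolding of_real_sum of_real_mult complex_norm_square by (simp add: ac_simps)
  finally have "Re (\<Sum>e\<in>E. braket (2 ^ n) f (\<lambda>a. (if bit a (Min e) \<noteq> bit a (Max e) then 1 else 0) * f a))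
      = (\<Sum>a<2 ^ n. cut_value E a * (cmod (f a))\<^sup>2)" by simp
  also have "\<dots> \<le> (\<Sum>a<2 ^ n. C * (cmod (f a))\<^sup>2)"
    by (intro sum_mono mult_right_mono) (auto simp: C)
  also have "\<dots> = C * Re (braket (2 ^ n) f f)"
    by (simp add: braket_self sum_distrib_left)
  finally show ?thesis .
qed

text \<open>\<open>2 - S_ij = (1 - X\<^sub>iX\<^sub>j)/2 + (1 - Y\<^sub>iY\<^sub>j)/2 + (1 - Z\<^sub>iZ\<^sub>j)/2\<close>\<close>

lemma two_minus_swap_bound:
  assumes G: "simple_graph n E" and C: "\<And>b. b < 2 ^ n \<Longrightarrow> cut_value E b \<le> C"
  shows "Re (\<Sum>e\<in>E. braket (2 ^ n) f (\<lambda>a. 2 * f a - f (edge_swap e a))) \<le> 3 * C * Re (braket (2 ^ n) f f)"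
proof -
  let ?Z = "\<lambda>e a. (if bit a (Min e) \<noteq> bit a (Max e) then 1 else 0) * f a"
  let ?X = "\<lambda>e a. (f a - f (xor a (edge_mask e))) / 2"
  let ?Y = "\<lambda>e a. (f a + (if bit a (Min e) = bit a (Max e) then 1 else -1) * f (xor a (edge_mask e))) / 2"
  have "braket (2 ^ n) f (\<lambda>a. 2 * f a - f (edge_swap e a))
      = braket (2 ^ n) f (?Z e) + braket (2 ^ n) f (?X e) + braket (2 ^ n) f (?Y e)" if e: "e \<in> E" for e
  proof -
    have "Min e \<noteq> Max e" using simple_graph_edge[OF G e] by auto
    then have "2 * f a - f (edge_swap e a) = ?Z e a + ?X e a + ?Y e a" for a
      unfolding edge_swap_def swap_bits_def edge_mask_def
      by (cases "bit a (Min e) = bit a (Max e)") (simp_all add: field_simps)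
    then show ?thesis by (simp add: braket_add_right[symmetric])
  qed
  then have "Re (\<Sum>e\<in>E. braket (2 ^ n) f (\<lambda>a. 2 * f a - f (edge_swap e a)))
      = Re (\<Sum>e\<in>E. braket (2 ^ n) f (?Z e)) + Re (\<Sum>e\<in>E. braket (2 ^ n) f (?X e))
        + Re (\<Sum>e\<in>E. braket (2 ^ n) f (?Y e))"
    by (simp add: sum.distrib)
  also have "\<dots> \<le> 3 * C * Re (braket (2 ^ n) f f)"
  proof -
    have "Re (\<Sum>e\<in>E. braket (2 ^ n) f (?Z e)) \<le> C * Re (braket (2 ^ n) f f)"
      using C by (rule zz_terms_bound)
    moreover have "Re (\<Sum>e\<in>E. braket (2 ^ n) f (?X e)) \<le> C * Re (braket (2 ^ n) f f)"
      using G C by (rule xx_terms_bound)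
    moreover have "Re (\<Sum>e\<in>E. braket (2 ^ n) f (?Y e)) \<le> C * Re (braket (2 ^ n) f f)"
      using G C by (rule yy_terms_bound)
    ultimately show ?thesis by linarith
  qed
  finally show ?thesis .
qed

section \<open>Eigenvalues of the Hamiltonian\<close>

lemma Re_braket_self_pos:
  assumes "a < N" "f a \<noteq> 0"
  shows "Re (braket N f f) > 0"
proof -
  have "0 < (cmod (f a))\<^sup>2" using assms(2) by simp
  also have "\<dots> \<le> (\<Sum>b<N. (cmod (f b))\<^sup>2)" using assms(1) by (intro member_le_sum) auto
  finally show ?thesis by (simp add: braket_self)
qed

lemma hamiltonian_eigenvector_braket:
  assumes G: "simple_graph n E" and v: "v \<in> carrier_vec (2 ^ n)"
    and eigen: "hamiltonian n E (\<lambda>_. 1) *\<^sub>v v = k \<cdot>\<^sub>v v"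
  shows "k * braket (2 ^ n) (($) v) (($) v)
    = of_nat (card E) * braket (2 ^ n) (($) v) (($) v) - (\<Sum>e\<in>E. braket (2 ^ n) (($) v) (\<lambda>a. v $ edge_swap e a))"
proof -
  have "k * braket (2 ^ n) (($) v) (($) v) = braket (2 ^ n) (($) v) (\<lambda>a. (hamiltonian n E (\<lambda>_. 1) *\<^sub>v v) $ a)"
    using v by (simp add: eigen braket_scale_right[symmetric] cong: braket_cong_right)
  also have "\<dots> = braket (2 ^ n) (($) v) (\<lambda>a. \<Sum>e\<in>E. v $ a - v $ edge_swap e a)"
    by (intro braket_cong_right) (simp add: hamiltonian_mult_vec[OF G v])
  finally show ?thesis
    using braket_scale_right[of "2 ^ n" "($) v" "of_nat (card E)" "($) v"]
    by (simp add: braket_sum_right braket_diff_right sum_subtractf)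
qed

lemma eigenvalue_hamiltonian_bound:
  assumes G: "simple_graph n E" and C: "\<And>b. b < 2 ^ n \<Longrightarrow> cut_value E b \<le> C"
    and eigen: "eigenvalue (hamiltonian n E (\<lambda>_. 1)) k"
  shows "Re k * (4 * real (card E) + n) \<le> 3 * C * (2 * real (card E) + n)"
proof -
  define m where "m = real (card E)"
  obtain v where v: "v \<in> carrier_vec (2 ^ n)" "v \<noteq> 0\<^sub>v (2 ^ n)"
    and Hv: "hamiltonian n E (\<lambda>_. 1) *\<^sub>v v = k \<cdot>\<^sub>v v"
    using eigen unfolding eigenvalue_def eigenvector_def by (auto simp: hamiltonian_def)
  define f where "f = ($) v"
  define q where "q = Re (braket (2 ^ n) f f)"
  define S where "S = Re (\<Sum>e\<in>E. braket (2 ^ n) f (\<lambda>a. f (edge_swap e a)))"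
  obtain a where "a < 2 ^ n" "f a \<noteq> 0"
  proof (rule ccontr)
    assume "\<not> thesis"
    with that have "v = 0\<^sub>v (2 ^ n)" using v(1) unfolding f_def by (intro eq_vecI) auto
    with v(2) show False ..
  qed
  then have q: "q > 0" unfolding q_def by (rule Re_braket_self_pos)
  have real: "braket (2 ^ n) f f = of_real q"
    unfolding q_def by (simp add: braket_self)
  have energy: "Re k * q = m * q - S"
    using arg_cong[OF hamiltonian_eigenvector_braket[OF G v(1) Hv], of Re]
    unfolding f_def[symmetric] real S_def m_def by simp
  have "2 * S + n * q \<ge> 0"
    unfolding S_def q_def by (rule edges_swap_lower_bound[OF G])
  then have "Re k * q \<le> (m + n / 2) * q"
    using energy by (simp add: algebra_simps)
  then have upper: "Re k \<le> m + n / 2"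
    using q by simp
  have "Re (\<Sum>e\<in>E. braket (2 ^ n) f (\<lambda>a. 2 * f a - f (edge_swap e a))) \<le> 3 * C * q"
    unfolding q_def by (rule two_minus_swap_bound[OF G C])
  moreover have "(\<Sum>e\<in>E. braket (2 ^ n) f (\<lambda>a. 2 * f a - f (edge_swap e a)))
      = 2 * of_nat (card E) * braket (2 ^ n) f f - (\<Sum>e\<in>E. braket (2 ^ n) f (\<lambda>a. f (edge_swap e a)))"
    by (simp add: braket_diff_right braket_scale_right sum_subtractf)
  then have "Re (\<Sum>e\<in>E. braket (2 ^ n) f (\<lambda>a. 2 * f a - f (edge_swap e a))) = 2 * m * q - S"
    unfolding real S_def m_def by simp
  ultimately have "(Re k + m) * q \<le> 3 * C * q"
    using energy by (simp add: algebra_simps)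
  then have cut: "Re k + m \<le> 3 * C"
    using q by simp
  have "Re k * (4 * m + n) = Re k * (2 * m + n) + 2 * m * Re k" by (simp add: algebra_simps)
  also have "\<dots> \<le> Re k * (2 * m + n) + 2 * m * (m + n / 2)"
    using upper by (intro add_left_mono mult_left_mono) (auto simp: m_def)
  also have "\<dots> = (Re k + m) * (2 * m + n)" by (simp add: algebra_simps)
  also have "\<dots> \<le> 3 * C * (2 * m + n)"
    using cut by (intro mult_right_mono) (auto simp: m_def)
  finally show ?thesis unfolding m_def .
qed

lemma trace_mult_commute:
  assumes "(X :: 'a :: comm_ring mat) \<in> carrier_mat N M" "Y \<in> carrier_mat M N"
  shows "(\<Sum>i<N. (X * Y) $$ (i, i)) = (\<Sum>j<M. (Y * X) $$ (j, j))"
proof -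
  have "(\<Sum>i<N. (X * Y) $$ (i, i)) = (\<Sum>i<N. \<Sum>j<M. X $$ (i, j) * Y $$ (j, i))"
    using assms by (intro sum.cong refl) (auto simp: scalar_prod_def atLeast0LessThan)
  also have "\<dots> = (\<Sum>j<M. \<Sum>i<N. Y $$ (j, i) * X $$ (i, j))"
    by (subst sum.swap) (simp add: mult.commute)
  also have "\<dots> = (\<Sum>j<M. (Y * X) $$ (j, j))"
    using assms by (intro sum.cong refl) (auto simp: scalar_prod_def atLeast0LessThan)
  finally show ?thesis .
qed

text \<open>The trace is the sum of the eigenvalues; we read this off a Schur triangularization.\<close>

lemma eigenvalue_Re_pos_if_trace_Re_pos:
  assumes A: "(A :: complex mat) \<in> carrier_mat N N" and trace: "Re (\<Sum>i<N. A $$ (i, i)) > 0"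
  obtains k where "eigenvalue A k" "Re k > 0"
proof -
  obtain es where es: "char_poly A = (\<Prod>a\<leftarrow>es. [:- a, 1:])"
    using char_poly_factorized[OF A] by blast
  define B where "B = schur_upper_triangular A es"
  have B: "B \<in> carrier_mat N N" "upper_triangular B" "similar_mat A B"
    using schur_upper_triangular[OF A es] unfolding B_def by auto
  obtain P Q where PQ: "P \<in> carrier_mat N N" "Q \<in> carrier_mat N N" "Q * P = 1\<^sub>m N" "A = P * B * Q"
    using B(3) A unfolding similar_mat_def similar_mat_wit_def Let_def by auto
  have "(\<Sum>i<N. A $$ (i, i)) = (\<Sum>i<N. (P * (B * Q)) $$ (i, i))"
    using PQ B(1) by (simp add: assoc_mult_mat[of P N N B N Q N])
  also have "\<dots> = (\<Sum>i<N. ((B * Q) * P) $$ (i, i))"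
    using PQ B(1) by (intro trace_mult_commute) auto
  also have "(B * Q) * P = B"
    using PQ B(1) by (simp add: assoc_mult_mat[of B N N Q N P N])
  finally obtain i where i: "i < N" "Re (B $$ (i, i)) > 0"
    using trace by (metis (no_types, lifting) Re_sum lessThan_iff not_le sum_nonpos)
  have "B $$ (i, i) \<in> set (diag_mat B)" using i B(1) unfolding diag_mat_def by auto
  then have "poly (char_poly B) (B $$ (i, i)) = 0"
    unfolding char_poly_upper_triangular[OF B(1,2)] by (rule linear_poly_root)
  then have "eigenvalue A (B $$ (i, i))"
    using char_poly_similar[OF B(3)] eigenvalue_root_char_poly[OF A] by simp
  with i show ?thesis by (intro that)
qed

section \<open>Basis states and the maximum cut\<close>

lemma edge_swap_eq_self_iff:
  "simple_graph n E \<Longrightarrow> e \<in> E \<Longrightarrow> edge_swap e a = a \<longleftrightarrow> bit a (Min e) = bit a (Max e)"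
  unfolding edge_swap_def by (metis simple_graph_edge(1) swap_bits_eq_self_iff less_irrefl)

lemma hamiltonian_mult_basis:
  assumes G: "simple_graph n E" and k: "k < 2 ^ n"
  shows "(hamiltonian n E (\<lambda>_. 1) *\<^sub>v unit_vec (2 ^ n) k) $ k = of_real (cut_value E k)"
proof -
  have "(hamiltonian n E (\<lambda>_. 1) *\<^sub>v unit_vec (2 ^ n) k) $ k
      = (\<Sum>e\<in>E. unit_vec (2 ^ n) k $ k - unit_vec (2 ^ n) k $ edge_swap e k)"
    by (simp add: hamiltonian_mult_vec[OF G _ k])
  also have "\<dots> = (\<Sum>e\<in>E. of_real (if bit k (Min e) \<noteq> bit k (Max e) then 1 else 0))"
    using k edge_swap_less_pow2[OF G _ k] edge_swap_eq_self_iff[OF G]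
    by (intro sum.cong refl) auto
  finally show ?thesis unfolding cut_value_def of_real_sum .
qed

lemma hamiltonian_diag:
  assumes "simple_graph n E" "k < 2 ^ n"
  shows "hamiltonian n E (\<lambda>_. 1) $$ (k, k) = of_real (cut_value E k)"
  using hamiltonian_mult_basis[OF assms] assms(2)
  by (simp add: mult_mat_vec_index_sum[OF hamiltonian_carrier _ assms(2)] if_distrib sum.delta' cong: if_cong)

lemma energy_comp_basis:
  assumes "simple_graph n E" "k < 2 ^ n"
  shows "energy (hamiltonian n E (\<lambda>_. 1)) (comp_basis n k) = cut_value E k"
proof -
  let ?u = "unit_vec (2 ^ n) k" and ?H = "hamiltonian n E (\<lambda>_. 1)"
  have "(\<Sum>a<2 ^ n. cnj (?u $ a) * (?H *\<^sub>v ?u) $ a) = (\<Sum>a<2 ^ n. if a = k then (?H *\<^sub>v ?u) $ a else 0)"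
    using assms(2) by (intro sum.cong refl) simp
  then show ?thesis
    using hamiltonian_mult_basis[OF assms] assms(2) unfolding energy_def comp_basis_def by (simp add: sum.delta')
qed

definition max_cut :: "nat \<Rightarrow> nat set set \<Rightarrow> real" where
  "max_cut n E = Max (cut_value E ` {..<2 ^ n})"

lemma cut_value_le_max_cut: "b < 2 ^ n \<Longrightarrow> cut_value E b \<le> max_cut n E"
  unfolding max_cut_def by (intro Max_ge) auto

lemma max_cut_attained: obtains k where "k < 2 ^ n" "cut_value E k = max_cut n E"
proof -
  have "max_cut n E \<in> cut_value E ` {..<2 ^ n}"
    unfolding max_cut_def by (intro Max_in) (auto simp: lessThan_empty_iff)
  then show ?thesis using that by auto
qed

lemma cut_value_nonneg: "cut_value E b \<ge> 0"
  unfolding cut_value_def by (intro sum_nonneg) auto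

lemma cut_value_lowest_endpoint:
  assumes G: "simple_graph n E" and e: "e \<in> E"
  shows "cut_value E (2 ^ Min e) \<ge> 1"
proof -
  have "1 = (if bit ((2::nat) ^ Min e) (Min e) \<noteq> bit ((2::nat) ^ Min e) (Max e) then 1 else 0 :: real)"
    using simple_graph_edge(1)[OF G e] by (simp add: bit_exp_iff)
  also have "\<dots> \<le> cut_value E (2 ^ Min e)"
    unfolding cut_value_def
    by (rule member_le_sum[OF e]) (auto simp: simple_graph_finite[OF G])
  finally show ?thesis .
qed

lemma OPT_G_max_eigenvalue:
  assumes "eigenvalue (hamiltonian n E w) k0"
  shows "Re k0 \<le> OPT_G n E w" "\<exists>k. eigenvalue (hamiltonian n E w) k \<and> OPT_G n E w = Re k"
proof -
  have fin: "finite (Re ` {k. eigenvalue (hamiltonian n E w) k})"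
    using card_finite_spectrum(1)[OF hamiltonian_carrier] unfolding spectrum_def by simp
  show "Re k0 \<le> OPT_G n E w"
    unfolding OPT_G_def using fin assms by (intro Max_ge) auto
  have "OPT_G n E w \<in> Re ` {k. eigenvalue (hamiltonian n E w) k}"
    unfolding OPT_G_def using fin assms by (intro Max_in) auto
  then show "\<exists>k. eigenvalue (hamiltonian n E w) k \<and> OPT_G n E w = Re k" by auto
qed

lemma hamiltonian_positive_eigenvalue:
  assumes G: "simple_graph n E" and e: "e \<in> E"
  obtains k where "eigenvalue (hamiltonian n E (\<lambda>_. 1)) k" "Re k > 0"
proof -
  have lowest: "2 ^ Min e < (2::nat) ^ n"
    using simple_graph_edge[OF G e] by simp
  have "0 < cut_value E (2 ^ Min e)"
    using cut_value_lowest_endpoint[OF G e] by simp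
  also have "\<dots> \<le> Re (\<Sum>i<2 ^ n. hamiltonian n E (\<lambda>_. 1) $$ (i, i))"
    unfolding Re_sum using lowest
    by (simp add: hamiltonian_diag[OF G] member_le_sum cut_value_nonneg)
  finally show ?thesis
    using that eigenvalue_Re_pos_if_trace_Re_pos[OF hamiltonian_carrier] by blast
qed

lemma OPT_G_pos:
  assumes "simple_graph n E" "E \<noteq> {}"
  shows "OPT_G n E (\<lambda>_. 1) > 0"
proof -
  obtain k where "eigenvalue (hamiltonian n E (\<lambda>_. 1)) k" "Re k > 0"
    using assms hamiltonian_positive_eigenvalue by blast
  then show ?thesis using OPT_G_max_eigenvalue(1) by fastforce
qed

lemma OPT_G_bound:
  assumes G: "simple_graph n E" and "E \<noteq> {}"
  shows "OPT_G n E (\<lambda>_. 1) * (4 * real (card E) + n) \<le> 3 * max_cut n E * (2 * real (card E) + n)"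
proof -
  obtain k0 where "eigenvalue (hamiltonian n E (\<lambda>_. 1)) k0"
    using assms hamiltonian_positive_eigenvalue by blast
  then obtain k where "eigenvalue (hamiltonian n E (\<lambda>_. 1)) k" "OPT_G n E (\<lambda>_. 1) = Re k"
    using OPT_G_max_eigenvalue(2) by blast
  with eigenvalue_hamiltonian_bound[OF G cut_value_le_max_cut] show ?thesis by simp
qed

lemma max_cut_ratio_bound:
  assumes G: "simple_graph n E" and "E \<noteq> {}"
  shows "1/3 + 2/3 * (real (card E) / (2 * real (card E) + real n)) \<le> max_cut n E / OPT_G n E (\<lambda>_. 1)"
proof -
  define m where "m = real (card E)"
  have "card E > 0"
    using assms simple_graph_finite[OF G] by (simp add: card_gt_0_iff)
  then have "2 * m + n > 0" unfolding m_def by simp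
  moreover have "OPT_G n E (\<lambda>_. 1) * (4 * m + n) \<le> 3 * max_cut n E * (2 * m + n)"
    using OPT_G_bound[OF assms] unfolding m_def .
  ultimately show ?thesis
    using OPT_G_pos[OF assms] unfolding m_def[symmetric] by (simp add: field_simps)
qed

section \<open>Product states\<close>

lemma energy_hamiltonian_le:
  assumes G: "simple_graph n E" and v: "v \<in> carrier_vec (2 ^ n)"
    and bounded: "\<And>a. a < 2 ^ n \<Longrightarrow> cmod (v $ a) \<le> 1"
  shows "energy (hamiltonian n E (\<lambda>_. 1)) v \<le> 2 * real (card E) * 2 ^ n"
proof -
  let ?H = "hamiltonian n E (\<lambda>_. 1)"
  have entry: "cmod ((?H *\<^sub>v v) $ a) \<le> 2 * real (card E)" if a: "a < 2 ^ n" for a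
  proof -
    have "cmod ((?H *\<^sub>v v) $ a) \<le> (\<Sum>e\<in>E. cmod (v $ a - v $ edge_swap e a))"
      unfolding hamiltonian_mult_vec[OF G v a] by (simp add: norm_sum)
    also have "\<dots> \<le> (\<Sum>e\<in>E. cmod (v $ a) + cmod (v $ edge_swap e a))"
      by (intro sum_mono norm_triangle_ineq4)
    also have "\<dots> \<le> (\<Sum>e\<in>E. 2)"
      using bounded a edge_swap_less_pow2[OF G _ a] by (intro sum_mono) (smt (verit))
    finally show ?thesis by simp
  qed
  have "energy ?H v = Re (\<Sum>a<2 ^ n. cnj (v $ a) * (?H *\<^sub>v v) $ a)"
    unfolding energy_def using v by simp
  also have "\<dots> \<le> (\<Sum>a<2 ^ n. cmod (cnj (v $ a) * (?H *\<^sub>v v) $ a))"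
    by (rule order_trans[OF complex_Re_le_cmod norm_sum])
  also have "\<dots> \<le> (\<Sum>a<(2::nat) ^ n. 1 * (2 * real (card E)))"
    unfolding norm_mult complex_mod_cnj
    by (intro sum_mono mult_mono) (auto simp: bounded entry)
  finally show ?thesis by (simp add: ac_simps)
qed

lemma product_state_bounded:
  assumes "product_state n v"
  shows "v \<in> carrier_vec (2 ^ n)" "\<And>a. a < 2 ^ n \<Longrightarrow> cmod (v $ a) \<le> 1"
proof -
  obtain \<phi> where \<phi>: "\<forall>i<n. (cmod (\<phi> i 0))\<^sup>2 + (cmod (\<phi> i 1))\<^sup>2 = 1"
    and v: "v = vec (2 ^ n) (\<lambda>k. \<Prod>i<n. \<phi> i (bit_of k i))"
    using assms unfolding product_state_def by blast
  show "v \<in> carrier_vec (2 ^ n)" unfolding v by simp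
  fix a :: nat assume a: "a < 2 ^ n"
  have "cmod (\<phi> i (bit_of a i)) \<le> 1" if "i < n" for i
  proof -
    have "(cmod (\<phi> i 0))\<^sup>2 \<le> 1" "(cmod (\<phi> i 1))\<^sup>2 \<le> 1"
      using \<phi> that by (smt (verit) zero_le_power2)+
    then have "(cmod (\<phi> i (bit_of a i)))\<^sup>2 \<le> 1"
      by (simp add: bit_of_eq_if)
    then show ?thesis by (simp add: abs_square_le_1)
  qed
  then have "(\<Prod>i<n. cmod (\<phi> i (bit_of a i))) \<le> 1" by (intro prod_le_1) auto
  then show "cmod (v $ a) \<le> 1" unfolding v using a by (simp add: prod_norm)
qed

lemma product_state_comp_basis:
  assumes k: "k < 2 ^ n"
  shows "product_state n (comp_basis n k)"
  unfolding product_state_def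
proof (intro exI conjI allI impI)
  define \<phi> where "\<phi> i b = (if b = bit_of k i then 1 else 0 :: complex)" for i b
  show "(cmod (\<phi> i 0))\<^sup>2 + (cmod (\<phi> i 1))\<^sup>2 = 1" for i
    unfolding \<phi>_def by (simp add: bit_of_eq_if)
  show "comp_basis n k = vec (2 ^ n) (\<lambda>a. \<Prod>i<n. \<phi> i (bit_of a i))"
  proof (rule eq_vecI)
    fix a assume "a < dim_vec (vec (2 ^ n) (\<lambda>a. \<Prod>i<n. \<phi> i (bit_of a i)))"
    then have a: "a < 2 ^ n" by simp
    show "comp_basis n k $ a = vec (2 ^ n) (\<lambda>a. \<Prod>i<n. \<phi> i (bit_of a i)) $ a"
    proof (cases "a = k")
      case False
      then obtain i where "i < n" "bit a i \<noteq> bit k i" using eq_if_low_bits_eq[OF a k] by blast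
      then have "(\<Prod>i<n. \<phi> i (bit_of a i)) = 0"
        unfolding \<phi>_def by (intro prod_zero) (auto simp: bit_of_eq_if)
      then show ?thesis using a k False unfolding comp_basis_def by simp
    qed (use a in \<open>simp add: comp_basis_def \<phi>_def\<close>)
  qed (simp add: comp_basis_def)
qed

lemma max_cut_le_PROD_G:
  assumes G: "simple_graph n E"
  shows "max_cut n E \<le> PROD_G n E (\<lambda>_. 1)"
proof -
  obtain k where k: "k < 2 ^ n" "cut_value E k = max_cut n E" by (rule max_cut_attained)
  have "bdd_above ((\<lambda>v. energy (hamiltonian n E (\<lambda>_. 1)) v) ` {v. product_state n v})"
    using energy_hamiltonian_le[OF G product_state_bounded] by (intro bdd_aboveI) auto
  moreover have "energy (hamiltonian n E (\<lambda>_. 1)) (comp_basis n k)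
      \<in> (\<lambda>v. energy (hamiltonian n E (\<lambda>_. 1)) v) ` {v. product_state n v}"
    using product_state_comp_basis[OF k(1)] by auto
  ultimately show ?thesis
    unfolding PROD_G_def energy_comp_basis[OF G k(1), unfolded k(2), symmetric] by (rule cSup_upper[rotated])
qed

theorem theorem5:
  fixes n :: nat and E :: "nat set set"
  assumes "simple_graph n E"
    and "connected_graph n E"
    and "E \<noteq> {}"
  shows "PROD_G n E (\<lambda>_. 1) / OPT_G n E (\<lambda>_. 1)
           \<ge> 1/3 + 2/3 * (real (card E) / (2 * real (card E) + real n)) \<and>
         (\<exists>k<2 ^ n. energy (hamiltonian n E (\<lambda>_. 1)) (comp_basis n k) / OPT_G n E (\<lambda>_. 1)
           \<ge> 1/3 + 2/3 * (real (card E) / (2 * real (card E) + real n)))"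
proof -
  note G = assms(1) and ratio = max_cut_ratio_bound[OF assms(1,3)]
  have "max_cut n E / OPT_G n E (\<lambda>_. 1) \<le> PROD_G n E (\<lambda>_. 1) / OPT_G n E (\<lambda>_. 1)"
    using max_cut_le_PROD_G[OF G] OPT_G_pos[OF assms(1,3)] by (intro divide_right_mono) auto
  moreover obtain k where "k < 2 ^ n" "cut_value E k = max_cut n E"
    by (rule max_cut_attained)
  ultimately show ?thesis
    using ratio energy_comp_basis[OF G] by fastforce
qed

end
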